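(* For every $s \in \mathcal{S}$, $r(s) \equiv s(0) \pmod 2$.
   Context: For a step function $s$ on $[0,\tfrac12)$ let $J_s(t)=\tfrac12(\lim_{\tau\downarrow t}s(\tau)-\lim_{\tau\uparrow t}s(\tau))$. A Laurent polynomial $\delta\in\mathbf{Q}[t,t^{-1}]$ is symmetric if $\delta(t^{-1})=\delta(t)$. $\mathcal{S}$ is the set of integer-valued step functions $s$ on $[0,\tfrac12)$ such that: (1) $s$ has finitely many discontinuities and is continuous at $0$; (2) for all $t$, $s(t)=\tfrac12(\lim_{\tau\downarrow t}s(\tau)+\lim_{\tau\uparrow t}s(\tau))$; (3) $J_s(t)\in\mathbf{Z}$ for all $t$; (4) if $J_s(t)\neq0$ then $e^{2\pi i t}$ is a root of an irreducible symmetric rational polynomial; (5) if $\delta(e^{2\pi i\alpha_1})=\delta(e^{2\pi i\alpha_2})=0$ for some symmetric irreducible rational polynomial $\delta$, then $J_s(\alpha_1)\equiv J_s(\alpha_2)\pmod 2$. For $s\in\mathcal{S}$: $T_s=\{t: J_s(t)\neq0\}$; $T_{s,\delta}=\{t\in T_s:\delta(e^{2\pi i t})=0\}$; $r_\delta(s)=\max_{t\in T_{s,\delta}}|s(t)|+\max_{t\in T_{s,\delta}}|J_s(t)|$ (for $T_{s,\delta}\ne\emptyset$); $r(s)=\max\big(\{r_\delta(s)\}_\delta\cup\{s(0)\}\big)$. *)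

theory Defs
  imports Complex_Main "HOL-Computational_Algebra.Polynomial" "HOL-Computational_Algebra.Factorial_Ring"
begin

text \<open>Step functions are modelled as s :: real => int; only the values on [0,1/2) matter.\<close>

definition step_fun :: "(real \<Rightarrow> int) \<Rightarrow> bool" where
  "step_fun s \<longleftrightarrow> (\<exists>D. finite D \<and> D \<subseteq> {0<..<1/2} \<and>
     (\<forall>t\<in>{0..<1/2} - D. \<exists>e>0. \<forall>\<tau>\<in>{0..<1/2}. \<bar>\<tau> - t\<bar> < e \<longrightarrow> s \<tau> = s t))"

definition lim_right :: "(real \<Rightarrow> int) \<Rightarrow> real \<Rightarrow> real" where
  "lim_right s t = Lim (at_right t) (\<lambda>\<tau>. real_of_int (s \<tau>))"

definition lim_left :: "(real \<Rightarrow> int) \<Rightarrow> real \<Rightarrow> real" where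
  "lim_left s t = Lim (at_left t) (\<lambda>\<tau>. real_of_int (s \<tau>))"

text \<open>Jump function; at t = 0 (left end of the domain, where s is continuous) it is 0.\<close>
definition Jmp :: "(real \<Rightarrow> int) \<Rightarrow> real \<Rightarrow> real" where
  "Jmp s t = (if t \<le> 0 then 0 else (lim_right s t - lim_left s t) / 2)"

text \<open>A nonzero Laurent polynomial in Q[t,t^-1] is uniquely written t^k * p(t) with
  p in Q[t], p(0) ~= 0.  Evaluation at a nonzero complex number:\<close>
definition laurent_eval :: "int \<Rightarrow> rat poly \<Rightarrow> complex \<Rightarrow> complex" where
  "laurent_eval k p z = z powi k * poly (map_poly of_rat p) z"

text \<open>t^k p(t) is irreducible in Q[t,t^-1] (units are c t^n) iff p is irreducible in Q[t]
  (given p(0) ~= 0); it is symmetric iff delta(t^-1) = delta(t).\<close>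
definition sym_irred :: "int \<Rightarrow> rat poly \<Rightarrow> bool" where
  "sym_irred k p \<longleftrightarrow> poly p 0 \<noteq> 0 \<and> irreducible p \<and>
     (\<forall>z::complex. z \<noteq> 0 \<longrightarrow> laurent_eval k p (inverse z) = laurent_eval k p z)"

definition root_at :: "int \<Rightarrow> rat poly \<Rightarrow> real \<Rightarrow> bool" where
  "root_at k p t \<longleftrightarrow> laurent_eval k p (cis (2 * pi * t)) = 0"

definition in_S :: "(real \<Rightarrow> int) \<Rightarrow> bool" where
  "in_S s \<longleftrightarrow> step_fun s \<and>
     (\<forall>t\<in>{0<..<1/2}. real_of_int (s t) = (lim_right s t + lim_left s t) / 2) \<and>
     (\<forall>t\<in>{0..<1/2}. Jmp s t \<in> \<int>) \<and>
     (\<forall>t\<in>{0..<1/2}. Jmp s t \<noteq> 0 \<longrightarrow> (\<exists>k p. sym_irred k p \<and> root_at k p t)) \<and>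
     (\<forall>k p a1 a2. sym_irred k p \<and> a1 \<in> {0..<1/2} \<and> a2 \<in> {0..<1/2} \<and>
        root_at k p a1 \<and> root_at k p a2 \<longrightarrow> (\<exists>m::int. Jmp s a1 - Jmp s a2 = 2 * of_int m))"

definition T_set :: "(real \<Rightarrow> int) \<Rightarrow> real set" where
  "T_set s = {t\<in>{0..<1/2}. Jmp s t \<noteq> 0}"

definition T_delta :: "(real \<Rightarrow> int) \<Rightarrow> int \<Rightarrow> rat poly \<Rightarrow> real set" where
  "T_delta s k p = {t\<in>T_set s. root_at k p t}"

definition r_delta :: "(real \<Rightarrow> int) \<Rightarrow> int \<Rightarrow> rat poly \<Rightarrow> real" where
  "r_delta s k p = Max ((\<lambda>t. \<bar>real_of_int (s t)\<bar>) ` T_delta s k p)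
                 + Max ((\<lambda>t. \<bar>Jmp s t\<bar>) ` T_delta s k p)"

definition r_inv :: "(real \<Rightarrow> int) \<Rightarrow> real" where
  "r_inv s = Max ({r_delta s k p | k p. sym_irred k p \<and> T_delta s k p \<noteq> {}}
                  \<union> {real_of_int (s 0)})"

end

(* Off its finitely many jump points s is locally constant, and at a jump point t the right
   limit exceeds the left limit by 2 J(t), an even integer.  Hence the right limit of s has the
   parity of s(0) on the whole connected interval [0,1/2).  As s(t) is the mean of the one-sided
   limits, s(t) = lim_right s t - J(t), so s(t) has the parity of s(0) + J(t).  On T_{s,delta} all
   jumps have the same parity, so r_delta = |s(t1)| + |J(t2)| has the parity of
   s(0) + J(t1) + J(t2), i.e. of s(0). *)

theory Submission
  imports Defs "HOL-Analysis.Elementary_Metric_Spaces"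
begin

definition same_parity :: "real \<Rightarrow> real \<Rightarrow> bool" where
  "same_parity a b \<longleftrightarrow> (\<exists>m::int. a - b = 2 * of_int m)"

lemma same_parity_refl [simp]: "same_parity a a"
  unfolding same_parity_def by (intro exI[of _ 0]) simp

lemma same_parity_sym: "same_parity a b \<Longrightarrow> same_parity b a"
  unfolding same_parity_def by (metis minus_diff_eq mult_minus_right of_int_minus)

lemma same_parity_trans [trans]: "same_parity a b \<Longrightarrow> same_parity b c \<Longrightarrow> same_parity a c"
  unfolding same_parity_def by (metis (no_types) diff_add_cancel add_diff_eq distrib_left of_int_add)

lemma same_parity_add:
  "same_parity a b \<Longrightarrow> same_parity c d \<Longrightarrow> same_parity (a + c) (b + d)"
  unfolding same_parity_def by (metis add_diff_add distrib_left of_int_add)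

lemma same_parity_add_double: "same_parity (a + 2 * of_int j) a"
  unfolding same_parity_def by auto

lemma same_parity_abs:
  assumes "x \<in> \<int>"
  shows "same_parity \<bar>x\<bar> x"
proof -
  from assms obtain j where "x = of_int j" by (auto elim: Ints_cases)
  then have "\<bar>x\<bar> - x = 2 * of_int (if j < 0 then - j else 0)" by auto
  then show ?thesis unfolding same_parity_def by blast
qed

lemma lim_right_eventually_eq:
  assumes "\<forall>\<^sub>F \<tau> in at_right t. s \<tau> = c"
  shows "lim_right s t = of_int c"
proof -
  have "((\<lambda>\<tau>. real_of_int (s \<tau>)) \<longlongrightarrow> of_int c) (at_right t)"
    by (rule tendsto_eventually, rule eventually_mono[OF assms]) simp
  then show ?thesis
    unfolding lim_right_def by (rule tendsto_Lim[OF trivial_limit_at_right_real])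
qed

lemma lim_left_eventually_eq:
  assumes "\<forall>\<^sub>F \<tau> in at_left t. s \<tau> = c"
  shows "lim_left s t = of_int c"
proof -
  have "((\<lambda>\<tau>. real_of_int (s \<tau>)) \<longlongrightarrow> of_int c) (at_left t)"
    by (rule tendsto_eventually, rule eventually_mono[OF assms]) simp
  then show ?thesis
    unfolding lim_left_def by (rule tendsto_Lim[OF trivial_limit_at_left_real])
qed

lemma lim_right_constant_on:
  assumes "s constant_on {t<..<u}" "b \<in> {t<..<u}"
  shows "lim_right s t = s b"
proof -
  have "\<forall>x\<in>{t<..<u}. s x = s b" using assms unfolding constant_on_def by metis
  moreover have "t < u" using assms(2) by simp
  ultimately show ?thesis
    by (intro lim_right_eventually_eq eventually_mono[OF eventually_at_right_real]) auto
qed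

lemma lim_left_constant_on:
  assumes "s constant_on {u<..<t}" "b \<in> {u<..<t}"
  shows "lim_left s t = s b"
proof -
  have "\<forall>x\<in>{u<..<t}. s x = s b" using assms unfolding constant_on_def by metis
  moreover have "u < t" using assms(2) by simp
  ultimately show ?thesis
    by (intro lim_left_eventually_eq eventually_mono[OF eventually_at_left_real]) auto
qed

lemma lim_right_constant_on_interior:
  assumes "s constant_on {u<..<v}" "b \<in> {u<..<v}"
  shows "lim_right s b = s b"
proof -
  have "(b + v) / 2 \<in> {b<..<v}" using assms(2) by auto
  moreover have "s constant_on {b<..<v}"
    using assms by (auto intro: constant_on_subset)
  ultimately have "lim_right s b = s ((b + v) / 2)" by (rule lim_right_constant_on[rotated])
  also have "s ((b + v) / 2) = s b"
    using assms \<open>(b + v) / 2 \<in> {b<..<v}\<close> unfolding constant_on_def by auto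
  finally show ?thesis .
qed

lemma locally_constant_imp_constant_on:
  fixes f :: "real \<Rightarrow> 'b"
  assumes "connected I" and loc: "\<And>t. t \<in> I \<Longrightarrow> \<exists>e>0. \<forall>\<tau>\<in>I. \<bar>\<tau> - t\<bar> < e \<longrightarrow> f \<tau> = f t"
  shows "f constant_on I"
proof (cases "I = {}")
  case False
  then obtain x where x: "x \<in> I" by blast
  have "f y = f x" if "y \<in> I" for y
  proof (rule connected_local_const[OF assms(1) that x], intro ballI)
    fix a assume "a \<in> I"
    with loc obtain e where "e > 0" "\<forall>\<tau>\<in>I. \<bar>\<tau> - a\<bar> < e \<longrightarrow> f \<tau> = f a" by blast
    then show "\<forall>\<^sub>F b in at a within I. f a = f b"
      unfolding eventually_at by (intro exI[of _ e]) (auto simp: dist_real_def)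
  qed
  then show ?thesis unfolding constant_on_def by blast
qed (simp add: constant_on_def)

lemma step_fun_lim_right_0:
  assumes "step_fun s"
  shows "lim_right s 0 = s 0"
proof -
  from assms obtain D where D: "D \<subseteq> {0<..<1/2}"
    and loc: "\<forall>t\<in>{0..<1/2} - D. \<exists>e>0. \<forall>\<tau>\<in>{0..<1/2}. \<bar>\<tau> - t\<bar> < e \<longrightarrow> s \<tau> = s t"
    unfolding step_fun_def by blast
  have "(0::real) \<in> {0..<1/2} - D" using D by auto
  with loc obtain e where e: "e > 0" "\<forall>\<tau>\<in>{0..<1/2}. \<bar>\<tau> - 0\<bar> < e \<longrightarrow> s \<tau> = s 0"
    by (rule bspec[elim_format]) blast
  have "\<forall>\<^sub>F \<tau> in at_right 0. \<tau> \<in> {0<..<min e (1/2)}"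
    by (rule eventually_at_right_real) (simp add: e(1))
  then have "\<forall>\<^sub>F \<tau> in at_right 0. s \<tau> = s 0"
  proof (rule eventually_mono)
    fix \<tau> :: real assume "\<tau> \<in> {0<..<min e (1/2)}"
    then show "s \<tau> = s 0" using e(2)[rule_format, of \<tau>] by auto
  qed
  then show ?thesis by (rule lim_right_eventually_eq)
qed

lemma step_fun_constant_near:
  assumes "step_fun s" "a \<in> {0..<1/2}"
  obtains e where "e > 0" "s constant_on {a<..<a + e}" "0 < a \<Longrightarrow> s constant_on {a - e<..<a}"
proof -
  from assms(1) obtain D where D: "finite D" "D \<subseteq> {0<..<1/2}"
    and loc: "\<forall>t\<in>{0..<1/2} - D. \<exists>e>0. \<forall>\<tau>\<in>{0..<1/2}. \<bar>\<tau> - t\<bar> < e \<longrightarrow> s \<tau> = s t"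
    unfolding step_fun_def by blast
  obtain \<delta> where \<delta>: "\<delta> > 0" "\<forall>x\<in>D. x \<noteq> a \<longrightarrow> \<delta> \<le> dist a x"
    using finite_set_avoid[OF D(1)] by blast
  define e where "e = min \<delta> (min (1/2 - a) (if a = 0 then 1 else a))"
  have e: "e > 0" "e \<le> \<delta>" "e \<le> 1/2 - a" "0 < a \<Longrightarrow> e \<le> a"
    using \<delta>(1) assms(2) unfolding e_def by (auto simp: min.coboundedI2)
  have off_D: "s constant_on I" if I: "connected I" "I \<subseteq> {0..<1/2}" "I \<subseteq> ball a e - {a}" for I
  proof (rule locally_constant_imp_constant_on[OF I(1)])
    fix t assume t: "t \<in> I"
    have "t \<notin> D"
      using t I(3) \<delta>(2) e(2) by (force simp: dist_commute)
    then obtain e' where "e' > 0" "\<forall>\<tau>\<in>{0..<1/2}. \<bar>\<tau> - t\<bar> < e' \<longrightarrow> s \<tau> = s t"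
      using loc t I(2) by blast
    then show "\<exists>e>0. \<forall>\<tau>\<in>I. \<bar>\<tau> - t\<bar> < e \<longrightarrow> s \<tau> = s t" using I(2) by blast
  qed
  show ?thesis
  proof
    show "s constant_on {a<..<a + e}"
      using e assms(2) by (intro off_D) (auto simp: dist_real_def)
    show "s constant_on {a - e<..<a}" if "0 < a"
      using e that by (intro off_D) (auto simp: dist_real_def)
  qed (fact e(1))
qed

lemma step_fun_finite_jumps:
  assumes "step_fun s"
  shows "finite (T_set s)"
proof -
  from assms obtain D where D: "finite D"
    and loc: "\<forall>t\<in>{0..<1/2} - D. \<exists>e>0. \<forall>\<tau>\<in>{0..<1/2}. \<bar>\<tau> - t\<bar> < e \<longrightarrow> s \<tau> = s t"
    unfolding step_fun_def by blast
  have no_jump: "Jmp s t = 0" if t: "t \<in> {0<..<1/2} - D" for t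
  proof -
    have "t \<in> {0..<1/2} - D" using t by auto
    with loc obtain e where e: "e > 0" "\<forall>\<tau>\<in>{0..<1/2}. \<bar>\<tau> - t\<bar> < e \<longrightarrow> s \<tau> = s t"
      by blast
    have "\<forall>\<^sub>F \<tau> in at_right t. \<tau> \<in> {t<..<min (t + e) (1/2)}"
      using e(1) t by (intro eventually_at_right_real) auto
    then have R: "\<forall>\<^sub>F \<tau> in at_right t. s \<tau> = s t"
    proof (rule eventually_mono)
      fix \<tau> :: real assume "\<tau> \<in> {t<..<min (t + e) (1/2)}"
      then show "s \<tau> = s t" using e(2)[rule_format, of \<tau>] t by auto
    qed
    have "\<forall>\<^sub>F \<tau> in at_left t. \<tau> \<in> {max (t - e) 0<..<t}"
      using e(1) t by (intro eventually_at_left_real) auto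
    then have L: "\<forall>\<^sub>F \<tau> in at_left t. s \<tau> = s t"
    proof (rule eventually_mono)
      fix \<tau> :: real assume "\<tau> \<in> {max (t - e) 0<..<t}"
      then show "s \<tau> = s t" using e(2)[rule_format, of \<tau>] t by auto
    qed
    show ?thesis
      using lim_right_eventually_eq[OF R] lim_left_eventually_eq[OF L] by (simp add: Jmp_def)
  qed
  have "T_set s \<subseteq> D"
  proof
    fix t assume "t \<in> T_set s"
    then have "t \<in> {0<..<1/2}" "Jmp s t \<noteq> 0"
      by (auto simp: T_set_def Jmp_def split: if_splits)
    with no_jump show "t \<in> D" by blast
  qed
  then show ?thesis using D finite_subset by blast
qed

lemma lim_right_same_parity:
  assumes "step_fun s" and J: "\<And>t. t \<in> {0<..<1/2} \<Longrightarrow> Jmp s t \<in> \<int>" and x: "x \<in> {0..<1/2}"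
  shows "same_parity (lim_right s x) (s 0)"
proof -
  have local: "\<exists>e>0. \<forall>b\<in>{0..<1/2}. \<bar>b - a\<bar> < e \<longrightarrow> same_parity (lim_right s b) (lim_right s a)"
    if a: "a \<in> {0..<1/2}" for a :: real
  proof -
    obtain e where e: "e > 0" "s constant_on {a<..<a + e}"
      "0 < a \<Longrightarrow> s constant_on {a - e<..<a}"
      using step_fun_constant_near[OF assms(1) a] by blast
    have "same_parity (lim_right s b) (lim_right s a)" if b: "b \<in> {0..<1/2}" "\<bar>b - a\<bar> < e" for b :: real
    proof (cases b a rule: linorder_cases)
      case less
      then have pos: "0 < a" and b': "b \<in> {a - e<..<a}" using b by auto
      have "lim_right s b = s b"
        using lim_right_constant_on_interior[OF e(3)[OF pos] b'] .
      also have "\<dots> = lim_left s a"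
        using lim_left_constant_on[OF e(3)[OF pos] b'] by simp
      finally have "lim_right s a = lim_right s b + 2 * Jmp s a"
        using pos by (simp add: Jmp_def field_simps)
      moreover obtain j where "Jmp s a = of_int j" using J pos a by (auto elim: Ints_cases)
      ultimately show ?thesis by (metis same_parity_add_double same_parity_sym)
    next
      case greater
      then have b': "b \<in> {a<..<a + e}" using b by auto
      show ?thesis
        using lim_right_constant_on_interior[OF e(2) b'] lim_right_constant_on[OF e(2) b'] by simp
    qed simp
    then show ?thesis using e(1) by blast
  qed
  let ?P = "\<lambda>y. same_parity (lim_right s y) (s 0)"
  have "\<forall>\<^sub>F b in at a within {0..<1/2}. ?P a = ?P b" if "a \<in> {0..<1/2}" for a :: real
  proof -
    from local[OF that] obtain e where "e > 0"
      "\<forall>b\<in>{0..<1/2}. \<bar>b - a\<bar> < e \<longrightarrow> same_parity (lim_right s b) (lim_right s a)" by blast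
    then show ?thesis
      unfolding eventually_at
      by (intro exI[of _ e]) (auto simp: dist_real_def intro: same_parity_trans same_parity_sym)
  qed
  then have "?P 0 = ?P x"
    using x by (intro connected_local_const[where A = "{0..<1/2}"]) auto
  then show ?thesis using step_fun_lim_right_0[OF assms(1)] by simp
qed

lemma in_S_jump_point_parity:
  assumes "in_S s" "t \<in> T_set s"
  shows "same_parity (real_of_int (s t)) (s 0 + Jmp s t)"
proof -
  have t: "t \<in> {0<..<1/2}" using assms(2) by (auto simp: T_set_def Jmp_def split: if_splits)
  have "real_of_int (s t) = (lim_right s t + lim_left s t) / 2"
    using assms(1) t unfolding in_S_def by blast
  then have s_t: "real_of_int (s t) = lim_right s t - Jmp s t"
    using t by (simp add: Jmp_def field_simps)
  obtain m where m: "lim_right s t - s 0 = 2 * of_int m"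
    using lim_right_same_parity[of s t] assms(1) t unfolding in_S_def same_parity_def by force
  have "Jmp s t \<in> \<int>" using assms(1) t unfolding in_S_def by auto
  then obtain j where j: "Jmp s t = of_int j" by (auto elim: Ints_cases)
  have "real_of_int (s t) - (s 0 + Jmp s t) = 2 * of_int (m - j)"
    using s_t m j by simp
  then show ?thesis unfolding same_parity_def by blast
qed

lemma r_delta_same_parity:
  assumes S: "in_S s" and kp: "sym_irred k p" "T_delta s k p \<noteq> {}"
  shows "same_parity (r_delta s k p) (s 0)"
proof -
  let ?T = "T_delta s k p"
  have T: "?T \<subseteq> T_set s" by (auto simp: T_delta_def)
  have "finite ?T"
    using S step_fun_finite_jumps finite_subset[OF T] unfolding in_S_def by blast
  then have "Max ((\<lambda>t. \<bar>real_of_int (s t)\<bar>) ` ?T) \<in> (\<lambda>t. \<bar>real_of_int (s t)\<bar>) ` ?T"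
    and "Max ((\<lambda>t. \<bar>Jmp s t\<bar>) ` ?T) \<in> (\<lambda>t. \<bar>Jmp s t\<bar>) ` ?T"
    using kp(2) by simp_all
  then obtain t1 t2 where t12: "t1 \<in> ?T" "t2 \<in> ?T"
    "Max ((\<lambda>t. \<bar>real_of_int (s t)\<bar>) ` ?T) = \<bar>real_of_int (s t1)\<bar>"
    "Max ((\<lambda>t. \<bar>Jmp s t\<bar>) ` ?T) = \<bar>Jmp s t2\<bar>"
    by blast
  have in_T: "t1 \<in> T_set s" "t2 \<in> T_set s" using t12 T by auto
  then have dom: "t1 \<in> {0..<1/2}" "t2 \<in> {0..<1/2}" by (auto simp: T_set_def)
  then have J_int: "Jmp s t2 \<in> \<int>" using S unfolding in_S_def by blast
  have "same_parity (Jmp s t1) (Jmp s t2)"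
    using S kp(1) dom t12(1,2) unfolding in_S_def same_parity_def T_delta_def by blast
  then have J_par: "same_parity (Jmp s t1) \<bar>Jmp s t2\<bar>"
    using same_parity_abs[OF J_int] same_parity_sym same_parity_trans by blast
  have "same_parity \<bar>real_of_int (s t1)\<bar> (s 0 + Jmp s t1)"
    using same_parity_trans[OF same_parity_abs in_S_jump_point_parity[OF S in_T(1)]] by simp
  then have "same_parity (r_delta s k p) (s 0 + Jmp s t1 + \<bar>Jmp s t2\<bar>)"
    unfolding r_delta_def t12(3,4) by (rule same_parity_add[OF _ same_parity_refl])
  also have "same_parity \<dots> (s 0 + 2 * \<bar>Jmp s t2\<bar>)"
    using J_par unfolding same_parity_def by (simp add: algebra_simps)
  also have "same_parity \<dots> (s 0)"
  proof -
    obtain j where "Jmp s t2 = of_int j" using J_int by (auto elim: Ints_cases)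
    then show ?thesis using same_parity_add_double[of "s 0" "\<bar>j\<bar>"] by simp
  qed
  finally show ?thesis .
qed

lemma finite_r_delta_values:
  assumes "finite (T_set s)"
  shows "finite {r_delta s k p | k p. sym_irred k p \<and> T_delta s k p \<noteq> {}}"
proof -
  have "{r_delta s k p | k p. sym_irred k p \<and> T_delta s k p \<noteq> {}}
      \<subseteq> (\<lambda>T. Max ((\<lambda>t. \<bar>real_of_int (s t)\<bar>) ` T) + Max ((\<lambda>t. \<bar>Jmp s t\<bar>) ` T)) ` Pow (T_set s)"
    by (auto simp: r_delta_def T_delta_def)
  then show ?thesis using assms finite_subset by blast
qed

theorem mainTheorem3:
  fixes s :: "real \<Rightarrow> int"
  assumes "in_S s"
  shows "\<exists>m::int. r_inv s = real_of_int (s 0) + 2 * of_int m"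
proof -
  let ?R = "{r_delta s k p | k p. sym_irred k p \<and> T_delta s k p \<noteq> {}}"
  have "finite ?R"
    using assms step_fun_finite_jumps finite_r_delta_values unfolding in_S_def by blast
  then have "r_inv s \<in> ?R \<union> {real_of_int (s 0)}"
    unfolding r_inv_def by (intro Max_in) auto
  then have "same_parity (r_inv s) (s 0)"
    by (force intro: r_delta_same_parity[OF assms])
  then show ?thesis unfolding same_parity_def by (auto simp: algebra_simps)
qed

end
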